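(* Let $(R,+,0,\times,1,\leq)$ be a partially ordered unitary (nonassociative) ring. For $x \in R$ define $x^{\to 0} = 1$, $x^{\to n+1} = x\, x^{\to n}$, and $x^{\leftarrow 0} = 1$, $x^{\leftarrow n+1} = x^{\leftarrow n} x$. Suppose that: (1) $1 \geq 0$; (2) $R$ is monotone $\sigma$-complete; (3) every $x \in\, ]0,1]$ has a right-sup-almost-inverse; (4) every $x \in\, ]0,1]$ has a left-sup-almost-inverse; (5) for every $x \in [0,1[$, $\inf_{n} x^{\to n} = 0$; (6) for every $x \in [0,1[$, $\inf_{n} x^{\leftarrow n} = 0$; (7) for every $x \in\, ]0,1[$, if $x$ has a left inverse $x_L^{-1}$ and a right inverse $x_R^{-1}$ then $x_L^{-1} = x_R^{-1}$. Then every $x \in\, ]0,1]$ is invertible, with inverse $\sum_{n \in \mathbb{N}} (1-x)^{\leftarrow n} := \sup_n \sum_{k=0}^n (1-x)^{\leftarrow k}$ (which equals $\sum_{n\in\mathbb{N}}(1-x)^{\to n} := \sup_n \sum_{k=0}^n (1-x)^{\to k}$).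
   Context: Rings are not assumed associative or commutative: a ring is an abelian group $(R,+,0)$ with a biadditive multiplication; unitary means there is a two-sided multiplicative unit $1$. A partially ordered ring is a ring with a partial order $\leq$ such that $y \geq z \Rightarrow x+y \geq x+z$ and $x \geq 0, y \geq 0 \Rightarrow xy \geq 0$. Write $x<y$ for $x \le y$, $x\ne y$; intervals such as $]0,1]$, $[0,1[$, $]0,1[$ are defined with respect to $\leq$. A poset is monotone $\sigma$-complete if every increasing sequence that is bounded above has a supremum. An element $x > 0$ has a right-sup-almost-inverse if there is $y > 0$ with $xy \geq 1$, and a left-sup-almost-inverse if there is $y > 0$ with $yx \geq 1$. A left (right) inverse of $x$ is $y$ with $yx = 1$ ($xy = 1$); $x$ is invertible if it has a two-sided inverse. *)

theory Defs
  imports Main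
begin

fun rpow :: "'a::{times,one} \<Rightarrow> nat \<Rightarrow> 'a" where
  "rpow x 0 = 1"
| "rpow x (Suc n) = x * rpow x n"

fun lpow :: "'a::{times,one} \<Rightarrow> nat \<Rightarrow> 'a" where
  "lpow x 0 = 1"
| "lpow x (Suc n) = lpow x n * x"

definition is_lub :: "'a::order set \<Rightarrow> 'a \<Rightarrow> bool" where
  "is_lub S s \<longleftrightarrow> (\<forall>x\<in>S. x \<le> s) \<and> (\<forall>u. (\<forall>x\<in>S. x \<le> u) \<longrightarrow> s \<le> u)"

definition is_glb :: "'a::order set \<Rightarrow> 'a \<Rightarrow> bool" where
  "is_glb S s \<longleftrightarrow> (\<forall>x\<in>S. s \<le> x) \<and> (\<forall>u. (\<forall>x\<in>S. u \<le> x) \<longrightarrow> u \<le> s)"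

definition mono_sigma_complete :: "'a::order itself \<Rightarrow> bool" where
  "mono_sigma_complete _ \<longleftrightarrow>
     (\<forall>f :: nat \<Rightarrow> 'a. (\<forall>n. f n \<le> f (Suc n)) \<and> (\<exists>u. \<forall>n. f n \<le> u)
        \<longrightarrow> (\<exists>s. is_lub (range f) s))"

definition po_unitary_ring :: "'a::{ab_group_add,times,one,order} itself \<Rightarrow> bool" where
  "po_unitary_ring _ \<longleftrightarrow>
     (\<forall>x y z :: 'a. x * (y + z) = x * y + x * z) \<and>
     (\<forall>x y z :: 'a. (y + z) * x = y * x + z * x) \<and>
     (\<forall>x :: 'a. 1 * x = x \<and> x * 1 = x) \<and>
     (\<forall>x y z :: 'a. z \<le> y \<longrightarrow> x + z \<le> x + y) \<and>
     (\<forall>x y :: 'a. 0 \<le> x \<longrightarrow> 0 \<le> y \<longrightarrow> 0 \<le> x * y)"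

definition has_right_sup_almost_inverse :: "'a::{times,one,zero,order} \<Rightarrow> bool" where
  "has_right_sup_almost_inverse x \<longleftrightarrow> (\<exists>y. 0 < y \<and> 1 \<le> x * y)"

definition has_left_sup_almost_inverse :: "'a::{times,one,zero,order} \<Rightarrow> bool" where
  "has_left_sup_almost_inverse x \<longleftrightarrow> (\<exists>y. 0 < y \<and> 1 \<le> y * x)"

end

theory Submission
  imports Defs
begin

text \<open>
  Put \<open>y = 1 - x\<close>, so \<open>0 \<le> y\<close>, and let \<open>S n = (\<Sum>k\<le>n. lpow y k)\<close>. Then
  \<open>S (n + 1) = 1 + S n * y\<close> and \<open>S n * x = 1 - lpow y (n + 1)\<close>. If \<open>z * x \<ge> 1\<close> with
  \<open>z \<ge> 0\<close>, induction gives \<open>S n \<le> z * x + z * y = z\<close>, so by monotone \<open>\<sigma>\<close>-completeness the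
  increasing sequence \<open>S\<close> has a supremum \<open>s\<close>. From \<open>s \<le> 1 + s * y\<close> we get \<open>s * x \<le> 1\<close>,
  and \<open>1 - s * x \<le> 1 - S n * x = lpow y (n + 1)\<close> makes \<open>1 - s * x\<close> a lower bound of the
  powers of \<open>y\<close>, whose infimum is \<open>0\<close>; hence \<open>s * x = 1\<close>. The mirror argument with \<open>rpow\<close>
  yields a right inverse, and the two one-sided inverses coincide.
\<close>

text \<open>The multiplication is a parameter so that every lemma also applies to the opposite
  ring, which exchanges \<open>lpow\<close> with \<open>rpow\<close> and left with right inverses.\<close>

locale po_ring =
  fixes mul :: "'a::{ab_group_add,one,order} \<Rightarrow> 'a \<Rightarrow> 'a"  (infixl "\<odot>" 70)
  assumes mult_distrib_left: "a \<odot> (b + c) = a \<odot> b + a \<odot> c"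
    and mult_distrib_right: "(a + b) \<odot> c = a \<odot> c + b \<odot> c"
    and mult_one_left [simp]: "1 \<odot> a = a"
    and mult_one_right [simp]: "a \<odot> 1 = a"
    and add_left_mono: "(b::'a) \<le> c \<Longrightarrow> a + b \<le> a + c"
    and mult_nonneg: "0 \<le> a \<Longrightarrow> 0 \<le> b \<Longrightarrow> 0 \<le> a \<odot> b"
    and zero_le_one: "(0::'a) \<le> 1"
begin

sublocale ord: ordered_ab_group_add "(+) :: 'a \<Rightarrow> 'a \<Rightarrow> 'a" 0 "(-)" uminus "(\<le>)" "(<)"
  by standard (simp_all add: ac_simps less_le_not_le add_left_mono,
      metis add.commute add_left_mono)

lemma mult_zero_left [simp]: "0 \<odot> a = 0"
  using mult_distrib_right [of 0 0 a] by simp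

lemma mult_diff_distrib_left: "a \<odot> (b - c) = a \<odot> b - a \<odot> c"
  using mult_distrib_left [of a "b - c" c] by (simp add: algebra_simps)

lemma mult_diff_distrib_right: "(a - b) \<odot> c = a \<odot> c - b \<odot> c"
  using mult_distrib_right [of "a - b" b c] by (simp add: algebra_simps)

lemma mult_left_mono: "a \<le> b \<Longrightarrow> 0 \<le> c \<Longrightarrow> c \<odot> a \<le> c \<odot> b"
  using mult_nonneg [of c "b - a"] by (simp add: mult_diff_distrib_left)

lemma mult_right_mono: "a \<le> b \<Longrightarrow> 0 \<le> c \<Longrightarrow> a \<odot> c \<le> b \<odot> c"
  using mult_nonneg [of "b - a" c] by (simp add: mult_diff_distrib_right)

lemma sum_mult_distrib_right: "finite A \<Longrightarrow> (\<Sum>k\<in>A. f k) \<odot> c = (\<Sum>k\<in>A. f k \<odot> c)"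
  by (induction A rule: finite_induct) (simp_all add: mult_distrib_right)

lemma po_ring_opposite: "po_ring (\<lambda>a b. b \<odot> a)"
  by unfold_locales
    (simp_all add: mult_distrib_left mult_distrib_right add_left_mono mult_nonneg zero_le_one)

end

lemma po_ring_times:
  assumes "po_unitary_ring TYPE('a::{ab_group_add,times,one,order})" and "(0::'a) \<le> 1"
  shows "po_ring ((*) :: 'a \<Rightarrow> 'a \<Rightarrow> 'a)"
  using assms unfolding po_unitary_ring_def po_ring_def by blast

locale neumann_series = po_ring +
  fixes x :: "'a::{ab_group_add,one,order}" and p :: "nat \<Rightarrow> 'a"
  assumes x_nonneg: "0 \<le> x" and x_le_one: "x \<le> 1"
    and p_0: "p 0 = 1" and p_Suc: "p (Suc n) = p n \<odot> (1 - x)"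
begin

lemma one_minus_x_nonneg: "0 \<le> 1 - x"
  using x_le_one by simp

lemma p_nonneg: "0 \<le> p n"
  by (induction n) (auto simp: p_0 p_Suc zero_le_one intro: mult_nonneg one_minus_x_nonneg)

lemma partial_sum_Suc: "(\<Sum>k\<le>Suc n. p k) = 1 + (\<Sum>k\<le>n. p k) \<odot> (1 - x)"
  by (simp only: sum.atMost_Suc_shift sum_mult_distrib_right finite_atMost p_0 p_Suc)

lemma partial_sum_mono: "(\<Sum>k\<le>n. p k) \<le> (\<Sum>k\<le>Suc n. p k)"
  using p_nonneg [of "Suc n"] by simp

lemma partial_sum_mult_x: "(\<Sum>k\<le>n. p k) \<odot> x = 1 - p (Suc n)"
proof -
  have "(\<Sum>k\<le>n. p k) \<odot> x = (\<Sum>k\<le>n. p k) - (\<Sum>k\<le>n. p k) \<odot> (1 - x)"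
    by (simp add: mult_diff_distrib_left)
  also have "\<dots> = 1 - p (Suc n)"
    using partial_sum_Suc [of n] by (simp add: algebra_simps)
  finally show ?thesis .
qed

lemma partial_sum_le:
  assumes "0 \<le> z" and "1 \<le> z \<odot> x"
  shows "(\<Sum>k\<le>n. p k) \<le> z"
proof (induction n)
  case 0
  have "z \<odot> x \<le> z"
    using mult_left_mono [OF x_le_one \<open>0 \<le> z\<close>] by simp
  then show ?case
    using \<open>1 \<le> z \<odot> x\<close> by (simp add: p_0)
next
  case (Suc n)
  have "1 + (\<Sum>k\<le>n. p k) \<odot> (1 - x) \<le> z \<odot> x + z \<odot> (1 - x)"
    using \<open>1 \<le> z \<odot> x\<close> mult_right_mono [OF Suc one_minus_x_nonneg] by (rule ord.add_mono)
  also have "\<dots> = z"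
    by (simp add: mult_diff_distrib_left)
  finally show ?case
    by (simp only: partial_sum_Suc)
qed

lemma partial_sum_has_lub:
  assumes "mono_sigma_complete TYPE('a)" and "0 \<le> z" and "1 \<le> z \<odot> x"
  shows "\<exists>s. is_lub (range (\<lambda>n. \<Sum>k\<le>n. p k)) s"
proof -
  have "(\<forall>n. (\<Sum>k\<le>n. p k) \<le> (\<Sum>k\<le>Suc n. p k)) \<and> (\<exists>u. \<forall>n. (\<Sum>k\<le>n. p k) \<le> u)"
    using partial_sum_mono partial_sum_le assms(2,3) by blast
  then show ?thesis
    using assms(1) unfolding mono_sigma_complete_def
    by (auto dest: spec [of _ "\<lambda>n. \<Sum>k\<le>n. p k"])
qed

lemma lub_partial_sum_left_inverse:
  assumes lub: "is_lub (range (\<lambda>n. \<Sum>k\<le>n. p k)) s" and glb: "is_glb (range p) 0"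
  shows "s \<odot> x = 1"
proof (rule antisym)
  have sum_le_s: "(\<Sum>k\<le>n. p k) \<le> s" for n
    using lub unfolding is_lub_def by blast
  have s_nonneg: "0 \<le> s"
    using zero_le_one sum_le_s [of 0] by (simp add: p_0)
  have "(\<Sum>k\<le>n. p k) \<le> 1 + s \<odot> (1 - x)" for n
  proof (cases n)
    case 0
    then show ?thesis
      using mult_nonneg [OF s_nonneg one_minus_x_nonneg] by (simp add: p_0)
  next
    case (Suc m)
    then show ?thesis
      unfolding Suc partial_sum_Suc
      by (intro add_left_mono mult_right_mono sum_le_s one_minus_x_nonneg)
  qed
  then have "s \<le> 1 + s \<odot> (1 - x)"
    using lub unfolding is_lub_def by blast
  also have "\<dots> = s + (1 - s \<odot> x)"
    by (simp add: mult_diff_distrib_left)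
  finally show "s \<odot> x \<le> 1"
    by simp
  have "1 - s \<odot> x \<le> p k" for k
  proof (cases k)
    case 0
    then show ?thesis
      using mult_nonneg [OF s_nonneg x_nonneg] by (simp add: p_0 ord.diff_le_eq)
  next
    case (Suc n)
    then show ?thesis
      using mult_right_mono [OF sum_le_s x_nonneg, of n]
      by (simp add: partial_sum_mult_x algebra_simps)
  qed
  then have "1 - s \<odot> x \<le> 0"
    using glb unfolding is_glb_def by blast
  then show "1 \<le> s \<odot> x"
    by simp
qed

end

theorem mainTheorem12:
  assumes ring: "po_unitary_ring TYPE('a::{ab_group_add,times,one,order})"
    and h1: "(0::'a) \<le> 1"
    and h2: "mono_sigma_complete TYPE('a)"
    and h3: "\<forall>x::'a. x \<in> {0<..1} \<longrightarrow> has_right_sup_almost_inverse x"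
    and h4: "\<forall>x::'a. x \<in> {0<..1} \<longrightarrow> has_left_sup_almost_inverse x"
    and h5: "\<forall>x::'a. x \<in> {0..<1} \<longrightarrow> is_glb (range (rpow x)) 0"
    and h6: "\<forall>x::'a. x \<in> {0..<1} \<longrightarrow> is_glb (range (lpow x)) 0"
    and h7: "\<forall>x::'a. x \<in> {0<..<1} \<longrightarrow>
               (\<forall>l r. l * x = 1 \<longrightarrow> x * r = 1 \<longrightarrow> l = r)"
  shows "\<forall>x::'a. x \<in> {0<..1} \<longrightarrow>
           (\<exists>s. is_lub (range (\<lambda>n. \<Sum>k\<le>n. lpow (1 - x) k)) s
              \<and> is_lub (range (\<lambda>n. \<Sum>k\<le>n. rpow (1 - x) k)) s
              \<and> s * x = 1 \<and> x * s = 1)"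
proof (intro allI impI)
  fix x :: 'a
  assume x: "x \<in> {0<..1}"
  interpret po_ring "(*) :: 'a \<Rightarrow> 'a \<Rightarrow> 'a"
    using po_ring_times [OF ring h1] .
  interpret left: neumann_series "(*)" x "lpow (1 - x)"
    using x by unfold_locales auto
  interpret right: neumann_series "\<lambda>a b. b * a" x "rpow (1 - x)"
    using po_ring_opposite x
    by (auto simp: neumann_series_def neumann_series_axioms_def dest: order_less_imp_le)
  have "1 - x \<in> {0..<1}"
    using x by (auto simp: order_less_le ord.diff_le_eq)
  moreover obtain z where "0 < z" "1 \<le> z * x"
    using h4 x unfolding has_left_sup_almost_inverse_def by blast
  moreover obtain w where "0 < w" "1 \<le> x * w"
    using h3 x unfolding has_right_sup_almost_inverse_def by blast
  ultimately obtain s t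
    where s: "is_lub (range (\<lambda>n. \<Sum>k\<le>n. lpow (1 - x) k)) s" "s * x = 1"
      and t: "is_lub (range (\<lambda>n. \<Sum>k\<le>n. rpow (1 - x) k)) t" "x * t = 1"
    using h2 h5 h6 left.partial_sum_has_lub left.lub_partial_sum_left_inverse
      right.partial_sum_has_lub right.lub_partial_sum_left_inverse
    by (metis order_less_imp_le)
  have "s = t"
  proof (cases "x = 1")
    case True
    then show ?thesis using s(2) t(2) by simp
  next
    case False
    then show ?thesis using h7 x s(2) t(2) by auto
  qed
  then show "\<exists>s. is_lub (range (\<lambda>n. \<Sum>k\<le>n. lpow (1 - x) k)) s
              \<and> is_lub (range (\<lambda>n. \<Sum>k\<le>n. rpow (1 - x) k)) s
              \<and> s * x = 1 \<and> x * s = 1"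
    using s t by blast
qed

end
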